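(* Let $p$ be a prime, let $U$ be an open subgroup of $S$ and let $H\neq\{t\}$ be a closed normal subgroup of $U$. Then $H$ contains an element of the form $v=t+v_1t^{pj+1}+\dots$ (i.e. $v\equiv t+v_1t^{pj+1}\pmod{t^{pj+2}}$) for some integer $j\ge1$ and some non-zero $v_1\in\mathbb F_p$; such an element necessarily has infinite order.
   Context: $S$ denotes the group, under substitution $(f\circ g)(t)=f(g(t))$, of all power series $t+\sum_{k\ge1}(a_{pk}t^{pk}+a_{pk+1}t^{pk+1})$ with coefficients in $\mathbb F_p$; it is a pro-$p$ group with the topology in which the subgroups $\{f\in S: f\equiv t\bmod t^n\}$ form a base of open neighbourhoods of the identity $t$. *)

theory Defs
  imports "HOL-Computational_Algebra.Formal_Power_Series" "HOL-Algebra.Group" "HOL-Algebra.Coset" "HOL-Library.Cardinality"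
begin

text \<open>The coefficient field F_p is modelled by an arbitrary finite field type 'a with
  CARD('a) = p prime (any such field is F_p).\<close>

definition Sset :: "('a::{field,finite}) fps set" where
  "Sset = {f. fps_nth f 0 = 0 \<and> fps_nth f 1 = 1 \<and>
              (\<forall>n\<ge>2. n mod CARD('a) \<noteq> 0 \<and> n mod CARD('a) \<noteq> 1 \<longrightarrow> fps_nth f n = 0)}"

definition Sgrp :: "('a::{field,finite}) fps monoid" where
  "Sgrp = \<lparr>carrier = Sset, mult = (\<lambda>f g. fps_compose f g), one = fps_X\<rparr>"

text \<open>Basic open neighbourhoods of the identity: f congruent to t mod t^n.\<close>
definition Snbhd :: "nat \<Rightarrow> ('a::{field,finite}) fps set" where
  "Snbhd n = {f \<in> Sset. \<forall>k<n. fps_nth f (k) = fps_nth fps_X k}"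

definition open_subgroup_S :: "('a::{field,finite}) fps set \<Rightarrow> bool" where
  "open_subgroup_S U \<longleftrightarrow> subgroup U Sgrp \<and> (\<exists>n. Snbhd n \<subseteq> U)"

text \<open>A subset H of S is closed iff it contains every f in S that lies in H * Snbhd n for all n,
  i.e. the closure of H is the intersection of the sets H * Snbhd n.\<close>
definition closed_in_S :: "('a::{field,finite}) fps set \<Rightarrow> bool" where
  "closed_in_S H \<longleftrightarrow> H \<subseteq> Sset \<and>
     (\<forall>f \<in> Sset. (\<forall>n. \<exists>h \<in> H. \<exists>g \<in> Snbhd n. f = fps_compose h g) \<longrightarrow> f \<in> H)"

end

theory Submission
  imports Defs "HOL-Number_Theory.Residues"
begin

text \<open>Write \<open>p = CARD('a)\<close>. Every \<open>f \<in> S\<close> is \<open>X \<cdot> f' + (f - X \<cdot> f')\<close>, where \<open>f' - 1\<close> and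
  \<open>f - X \<cdot> f'\<close> are series in \<open>X \<^sup>p\<close>. As \<open>g \<^sup>p - X \<^sup>p = (g - X) \<^sup>p\<close>, substituting \<open>g \<equiv> X\<close> into a series in \<open>X \<^sup>p\<close>
  changes it very little, which gives a first-order Taylor formula for \<open>f \<circ> g\<close>; the leading
  terms of powers and commutators in \<open>S\<close> are read off from it.

  If \<open>v \<equiv> X + c X \<^bsup>pj + 1\<^esup>\<close> with \<open>c \<noteq> 0\<close>, then \<open>v \<^sup>p \<equiv> X + c \<^sup>p X^(p^2 j + 1)\<close>, and for
  \<open>n\<close> prime to \<open>p\<close> the power \<open>v \<^sup>n\<close> has leading term \<open>n c X \<^bsup>pj + 1\<^esup>\<close>; so \<open>v\<close> has
  infinite order.

  Take \<open>h \<in> H\<close>, \<open>h \<noteq> X\<close>. Unless its first nontrivial term already has degree \<open>pj + 1\<close>, it is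
  \<open>a X \<^bsup>pk\<^esup>\<close>. The commutator of \<open>h\<close> with \<open>X + X \<^bsup>pm + 1\<^esup> \<in> U\<close> (\<open>m \<equiv> 1 mod p\<close> large) lies
  in \<open>H\<close> and has derivative \<open>1 - a \<^sup>p X \<^bsup>pj\<^esup> + \<dots>\<close>. Its coefficients of degree \<open>\<equiv> 0 (mod p)\<close>
  below \<open>pj + 1\<close> are cancelled by further commutators whose derivatives are \<open>1\<close> to that
  order; those of degree \<open>\<equiv> 1 (mod p)\<close> equal coefficients of the derivative and vanish.
  What remains has leading term \<open>-a \<^sup>p X \<^bsup>pj + 1\<^esup>\<close>.\<close>

unbundle fps_syntax

section \<open>Congruence of power series modulo powers of X\<close>

definition fps_cong :: "nat \<Rightarrow> 'b::comm_ring_1 fps \<Rightarrow> 'b fps \<Rightarrow> bool" where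
  "fps_cong N f g \<longleftrightarrow> (\<forall>k<N. f $ k = g $ k)"

lemma fps_cong_refl [simp]: "fps_cong N f f"
  by (simp add: fps_cong_def)

lemma fps_cong_sym: "fps_cong N f g \<Longrightarrow> fps_cong N g f"
  by (simp add: fps_cong_def)

lemma fps_cong_trans [trans]: "fps_cong N f g \<Longrightarrow> fps_cong N g h \<Longrightarrow> fps_cong N f h"
  by (simp add: fps_cong_def)

lemma fps_cong_mono: "fps_cong N f g \<Longrightarrow> M \<le> N \<Longrightarrow> fps_cong M f g"
  by (simp add: fps_cong_def)

lemma fps_cong_add: "fps_cong N f g \<Longrightarrow> fps_cong N f' g' \<Longrightarrow> fps_cong N (f + f') (g + g')"
  by (simp add: fps_cong_def)

lemma fps_cong_diff: "fps_cong N f g \<Longrightarrow> fps_cong N f' g' \<Longrightarrow> fps_cong N (f - f') (g - g')"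
  by (simp add: fps_cong_def)

lemma fps_cong_iff_diff: "fps_cong N f g \<longleftrightarrow> fps_cong N (f - g) 0"
  by (simp add: fps_cong_def)

lemma fps_cong_mult:
  assumes "fps_cong N f g" "fps_cong N f' g'"
  shows "fps_cong N (f * f') (g * g')"
  using assms unfolding fps_cong_def fps_mult_nth by (intro allI impI sum.cong) auto

lemma fps_cong_mult_cancel_right:
  fixes A B W :: "'b::field fps"
  assumes "W $ 0 \<noteq> 0" "fps_cong N (A * W) (B * W)"
  shows "fps_cong N A B"
proof -
  have "fps_cong N (A * W * inverse W) (B * W * inverse W)"
    using assms(2) fps_cong_mult fps_cong_refl by blast
  then show ?thesis
    using inverse_mult_eq_1'[OF assms(1)] by (simp add: mult.assoc)
qed

lemma fps_cong_compose_left: "fps_cong N f g \<Longrightarrow> fps_cong N (f oo h) (g oo h)"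
  unfolding fps_cong_def fps_compose_nth by (intro allI impI sum.cong) auto

lemma fps_cong_X_nth_0: "1 \<le> r \<Longrightarrow> fps_cong r g fps_X \<Longrightarrow> g $ 0 = 0"
  by (auto simp: fps_cong_def)

lemma fps_neq_obtains_cong_nth_neq:
  assumes "f \<noteq> g"
  obtains n where "fps_cong n f g" "f $ n \<noteq> g $ n"
proof -
  have "\<exists>n. f $ n \<noteq> g $ n"
    using assms fps_ext by blast
  then have "f $ (LEAST n. f $ n \<noteq> g $ n) \<noteq> g $ (LEAST n. f $ n \<noteq> g $ n)"
    by (rule LeastI_ex)
  moreover have "fps_cong (LEAST n. f $ n \<noteq> g $ n) f g"
    unfolding fps_cong_def using not_less_Least by blast
  ultimately show ?thesis
    using that by blast
qed

lemma fps_cong_0_mult: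
  assumes "fps_cong a f 0" "fps_cong b g 0"
  shows "fps_cong (a + b) (f * g) 0"
  unfolding fps_cong_def
proof (intro allI impI)
  fix k assume k: "k < a + b"
  have "f $ i * g $ (k - i) = 0" if "i \<le> k" for i
    using assms k that by (cases "i < a") (auto simp: fps_cong_def)
  then show "(f * g) $ k = 0 $ k"
    by (simp add: fps_mult_nth)
qed

lemma fps_cong_0_mult_left: "fps_cong a f 0 \<Longrightarrow> fps_cong a (g * f) 0"
  using fps_cong_0_mult[of 0 g a f] by (simp add: fps_cong_def)

lemma fps_cong_0_power: "fps_cong a f 0 \<Longrightarrow> fps_cong (a * n) (f ^ n) 0"
proof (induction n)
  case (Suc n)
  then show ?case
    using fps_cong_0_mult[of a f "a * n" "f ^ n"] by simp
qed (simp add: fps_cong_def)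

lemma fps_cong_0_X_power_mult: "fps_cong a (fps_X ^ a * f) 0"
  by (simp add: fps_cong_def fps_X_power_mult_nth)

lemma fps_cong_0_imp_X_power_mult_shift: "fps_cong a f 0 \<Longrightarrow> f = fps_X ^ a * fps_shift a f"
  by (intro fps_ext) (auto simp: fps_cong_def fps_X_power_mult_nth)

lemma fps_cong_X_power_mult_lowest:
  "fps_cong (J + 1) (fps_X ^ J * G) (fps_const (G $ 0) * fps_X ^ J)"
  by (auto simp: fps_cong_def fps_X_power_mult_nth)

text \<open>\<open>D / W = (W - E) / W \<equiv> 1 - E\<close>, because \<open>E \<cdot> (W - 1)\<close> vanishes to order \<open>J + 1\<close>.\<close>

lemma fps_cong_mult_cancel_first_order:
  fixes Y W D E :: "'b::field fps"
  assumes YW: "fps_cong (J + 1) (Y * W) D" and W: "fps_cong (J + 1) W (D + E)"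
    and E: "fps_cong J E 0" and W0: "W $ 0 = 1"
  shows "fps_cong (J + 1) Y (1 - E)"
proof -
  have "fps_cong (J + 1) (E * (W - 1)) 0"
    using fps_cong_0_mult[OF E, of 1 "W - 1"] W0 by (simp add: fps_cong_def)
  moreover have "(W - E) - (1 - E) * W = E * (W - 1)"
    by (simp add: algebra_simps)
  ultimately have "fps_cong (J + 1) (W - E) ((1 - E) * W)"
    by (simp only: fps_cong_iff_diff[of _ "W - E"])
  moreover have "fps_cong (J + 1) D (W - E)"
    using fps_cong_diff[OF fps_cong_sym[OF W] fps_cong_refl[of _ E]] by simp
  ultimately have "fps_cong (J + 1) D ((1 - E) * W)"
    using fps_cong_trans by blast
  with YW have YW': "fps_cong (J + 1) (Y * W) ((1 - E) * W)"
    by (rule fps_cong_trans)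
  show ?thesis
    using fps_cong_mult_cancel_right[OF _ YW'] W0 by simp
qed

lemma fps_cong_0_power_diff:
  fixes x y :: "'b::comm_ring_1 fps"
  assumes "fps_cong A (x - y) 0" "fps_cong s x 0" "fps_cong s y 0" "1 \<le> l"
  shows "fps_cong (A + (l - 1) * s) (x ^ l - y ^ l) 0"
  using assms(4)
proof (induction l rule: dec_induct)
  case (step l)
  have "x ^ Suc l - y ^ Suc l = x ^ l * (x - y) + (x ^ l - y ^ l) * y"
    by (simp add: algebra_simps)
  moreover have "fps_cong (A + (Suc l - 1) * s) (x ^ l * (x - y)) 0"
    using fps_cong_0_mult[OF fps_cong_0_power[OF assms(2)] assms(1), of l]
    by (rule fps_cong_mono) simp
  moreover have "A + (Suc l - 1) * s \<le> A + (l - 1) * s + s"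
    using step.hyps by (cases l) auto
  then have "fps_cong (A + (Suc l - 1) * s) ((x ^ l - y ^ l) * y) 0"
    using fps_cong_0_mult[OF step.IH assms(3)] fps_cong_mono by blast
  ultimately show ?case
    using fps_cong_add by fastforce
qed (use assms(1) in simp)

lemma fps_cong_0_power_diff_linear:
  fixes x y :: "'b::comm_ring_1 fps"
  assumes A: "fps_cong A (x - y) 0" and s: "fps_cong s x 0" "fps_cong s y 0"
  shows "fps_cong (2 * A + s * m)
           (x ^ (m + 2) - y ^ (m + 2) - of_nat (m + 2) * y ^ (m + 1) * (x - y)) 0"
proof (induction m)
  case 0
  have "x ^ (0 + 2) - y ^ (0 + 2) - of_nat (0 + 2) * y ^ (0 + 1) * (x - y) = (x - y) * (x - y)"
    by (simp add: algebra_simps power2_eq_square)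
  moreover have "2 * A + s * 0 = A + A"
    by simp
  ultimately show ?case
    using fps_cong_0_mult[OF A A] by (simp only:)
next
  case (Suc m)
  define T where "T = x ^ (m + 2) - y ^ (m + 2) - of_nat (m + 2) * y ^ (m + 1) * (x - y)"
  have "x ^ (Suc m + 2) - y ^ (Suc m + 2) - of_nat (Suc m + 2) * y ^ (Suc m + 1) * (x - y)
      = x * T + of_nat (m + 2) * (y ^ (m + 1) * ((x - y) * (x - y)))"
    unfolding T_def by (simp add: algebra_simps)
  moreover have "fps_cong (2 * A + s * Suc m) (x * T) 0"
    using fps_cong_0_mult[OF s(1) Suc.IH[folded T_def]] by (rule fps_cong_mono) simp
  moreover have "fps_cong (2 * A + s * Suc m) (of_nat (m + 2) * (y ^ (m + 1) * ((x - y) * (x - y)))) 0"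
    using fps_cong_0_mult_left[OF fps_cong_0_mult[OF fps_cong_0_power[OF s(2)] fps_cong_0_mult[OF A A]]]
    by (rule fps_cong_mono) simp
  ultimately show ?case
    using fps_cong_add[of "2 * A + s * Suc m" "x * T" 0] by (simp only: add_0)
qed

section \<open>Characteristic p\<close>

context
  assumes prime_card: "prime CARD('a::{field,finite})"
begin

lemma CHAR_eq_CARD: "CHAR('a) = CARD('a)"
proof -
  have "CHAR('a) dvd CARD('a)"
    by (rule CHAR_dvd_CARD)
  then show ?thesis
    using prime_card CHAR_not_1[where 'a='a] unfolding prime_nat_iff by auto
qed

lemma of_nat_eq_0_iff_CARD_dvd: "(of_nat n :: 'a) = 0 \<longleftrightarrow> CARD('a) dvd n"
  using of_nat_eq_0_iff_char_dvd[where 'a='a] by (simp add: CHAR_eq_CARD)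

lemma of_nat_mod_CARD: "(of_nat (n mod CARD('a)) :: 'a) = of_nat n"
  using of_nat_eq_iff_cong_CHAR[where 'a='a] by (simp add: CHAR_eq_CARD cong_def)

lemma of_nat_CARD_mult_plus_1: "(of_nat (CARD('a) * j + 1) :: 'a) = 1"
proof -
  have "(CARD('a) * j + 1) mod CARD('a) = 1"
    using prime_ge_2_nat[OF prime_card] by (simp add: mod_Suc)
  then show ?thesis
    using of_nat_mod_CARD[of "CARD('a) * j + 1"] by simp
qed

lemma fps_add_power_CARD: "((x::'a fps) + y) ^ CARD('a) = x ^ CARD('a) + y ^ CARD('a)"
  by (rule freshmans_dream) (use prime_card in \<open>simp_all add: CHAR_eq_CARD\<close>)

lemma sum_power_plus_1_CARD: "(\<Sum>l<CARD('a). ((x::'a fps) + 1) ^ l) = x ^ (CARD('a) - 1)"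
proof (cases "x = 0")
  case True
  have "(of_nat CARD('a) :: 'a fps) = 0"
    by (simp add: of_nat_eq_0_iff_char_dvd CHAR_eq_CARD)
  then show ?thesis
    using True prime_gt_1_nat[OF prime_card] by simp
next
  case False
  have "x * (\<Sum>l<CARD('a). (x + 1) ^ l) = (x + 1) ^ CARD('a) - 1"
    using power_diff_1_eq[of "x + 1" "CARD('a)"] by simp
  also have "\<dots> = x ^ Suc (CARD('a) - 1)"
    using fps_add_power_CARD[of x 1] prime_gt_1_nat[OF prime_card] by simp
  also have "\<dots> = x * x ^ (CARD('a) - 1)"
    by (rule power_Suc)
  finally show ?thesis
    using False by simp
qed

end

section \<open>Series in \<open>X ^ p\<close> and the first-order Taylor formula\<close>

lemma Sset_nth_0: "f \<in> Sset \<Longrightarrow> f $ 0 = 0"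
  by (simp add: Sset_def)

lemma Sset_nth_1: "f \<in> Sset \<Longrightarrow> f $ 1 = 1"
  by (simp add: Sset_def)

lemma Sset_nth_nonzero:
  "f \<in> (Sset :: 'a::{field,finite} fps set) \<Longrightarrow> f $ n \<noteq> 0 \<Longrightarrow> 2 \<le> n \<Longrightarrow>
     n mod CARD('a) = 0 \<or> n mod CARD('a) = 1"
  by (auto simp: Sset_def)

definition p_supported :: "'a::{field,finite} fps \<Rightarrow> bool" where
  "p_supported G \<longleftrightarrow> (\<forall>n. G $ n \<noteq> 0 \<longrightarrow> CARD('a) dvd n)"

lemma fps_cong_deriv_minus_1:
  "fps_cong d f fps_X \<Longrightarrow> fps_cong (d - 1) (fps_deriv f - 1) 0"
  unfolding fps_cong_def
proof (intro allI impI)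
  fix n assume "\<forall>k<d. f $ k = fps_X $ k" "n < d - 1"
  then have "f $ (n + 1) = fps_X $ (n + 1)"
    by simp
  then show "(fps_deriv f - 1) $ n = 0 $ n"
    by (cases n) auto
qed

lemma fps_cong_minus_X_mult_deriv:
  "fps_cong d f fps_X \<Longrightarrow> fps_cong d (f - fps_X * fps_deriv f) 0"
  unfolding fps_cong_def
proof (intro allI impI)
  fix n assume "\<forall>k<d. f $ k = fps_X $ k" "n < d"
  then have "f $ n = fps_X $ n"
    by simp
  then show "(f - fps_X * fps_deriv f) $ n = 0 $ n"
    by (cases n) auto
qed

context
  assumes prime_card: "prime CARD('a::{field,finite})"
begin

lemma p_supported_deriv_minus_1:
  assumes f: "(f::'a fps) \<in> Sset"
  shows "p_supported (fps_deriv f - 1)"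
  unfolding p_supported_def
proof (intro allI impI)
  fix n assume nz: "(fps_deriv f - 1) $ n \<noteq> 0"
  show "CARD('a) dvd n"
  proof (cases "n = 0")
    case False
    then have coeff: "of_nat (n + 1) * f $ (n + 1) \<noteq> 0"
      using nz by simp
    then have "(n + 1) mod CARD('a) = 0 \<or> (n + 1) mod CARD('a) = 1"
      using Sset_nth_nonzero[OF f, of "n + 1"] False by auto
    moreover have "\<not> CARD('a) dvd (n + 1)"
      using coeff of_nat_eq_0_iff_CARD_dvd[OF prime_card, of "n + 1"] by auto
    then have "(n + 1) mod CARD('a) \<noteq> 0"
      by (simp add: dvd_eq_mod_eq_0)
    ultimately have "Suc n mod CARD('a) = 1"
      by simp
    then show ?thesis
      by (auto simp: mod_Suc mod_0_imp_dvd split: if_splits)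
  qed simp
qed

lemma p_supported_minus_X_mult_deriv:
  assumes f: "(f::'a fps) \<in> Sset"
  shows "p_supported (f - fps_X * fps_deriv f)"
  unfolding p_supported_def
proof (intro allI impI)
  fix n assume nz: "(f - fps_X * fps_deriv f) $ n \<noteq> 0"
  have n0: "n \<noteq> 0"
    using nz Sset_nth_0[OF f] by (cases n) auto
  then have "(f - fps_X * fps_deriv f) $ n = (1 - of_nat n) * f $ n"
    by (cases n) (auto simp: algebra_simps)
  then have coeff: "(1 - of_nat n) * f $ n \<noteq> 0"
    using nz by simp
  then have "n \<noteq> 1"
    by auto
  then have "n mod CARD('a) = 0 \<or> n mod CARD('a) = 1"
    using Sset_nth_nonzero[OF f, of n] coeff n0 by auto
  moreover have "n mod CARD('a) \<noteq> 1"
    using coeff of_nat_mod_CARD[OF prime_card, of n] by auto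
  ultimately show "CARD('a) dvd n"
    by auto
qed

text \<open>A series in \<open>X ^ p\<close> barely moves under substitution of \<open>g \<equiv> X\<close>, because
  \<open>g ^ p - X ^ p = (g - X) ^ p\<close>.\<close>

lemma p_supported_compose:
  assumes G: "p_supported (G::'a fps)" and e: "fps_cong e G 0"
    and r: "1 \<le> r" and g: "fps_cong r g fps_X"
  shows "fps_cong (e + CARD('a) * (r - 1)) (G oo g) G"
  unfolding fps_cong_def
proof (intro allI impI)
  define q where "q = CARD('a)"
  fix n assume n: "n < e + CARD('a) * (r - 1)"
  have key: "(g ^ i) $ n = (fps_X ^ i) $ n" if Gi: "G $ i \<noteq> 0" for i
  proof -
    obtain l where i: "i = q * l"
      using G Gi by (auto simp: p_supported_def q_def)
    show ?thesis
    proof (cases "l = 0")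
      case False
      have "fps_cong r (g - fps_X) 0"
        using g by (simp add: fps_cong_def)
      then have A: "fps_cong (r * q) (g ^ q - fps_X ^ q) 0"
        using fps_add_power_CARD[OF prime_card, of "g - fps_X" fps_X] fps_cong_0_power
        by (simp add: q_def)
      have "fps_cong 1 g 0"
        using fps_cong_X_nth_0[OF r g] by (simp add: fps_cong_def)
      then have s1: "fps_cong q (g ^ q) 0"
        using fps_cong_0_power by fastforce
      have s2: "fps_cong q ((fps_X :: 'a fps) ^ q) 0"
        by (simp add: fps_cong_def)
      have "fps_cong (r * q + (l - 1) * q) ((g ^ q) ^ l - (fps_X ^ q) ^ l) 0"
        using fps_cong_0_power_diff[OF A s1 s2] False by simp
      moreover have "e \<le> i"
        using e Gi by (auto simp: fps_cong_def not_less[symmetric])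
      then have "n < r * q + (l - 1) * q"
        using n i False r by (cases l; cases r) (auto simp: q_def algebra_simps)
      ultimately show ?thesis
        unfolding i by (auto simp: fps_cong_def power_mult)
    qed (simp add: i)
  qed
  have "(G oo g) $ n = (\<Sum>i = 0..n. G $ i * (fps_X ^ i) $ n)"
    unfolding fps_compose_nth using key by (intro sum.cong refl) (metis mult_zero_left)
  also have "\<dots> = (\<Sum>i = 0..n. if i = n then G $ i else 0)"
    by (intro sum.cong) auto
  also have "\<dots> = G $ n"
    by (simp add: sum.delta')
  finally show "(G oo g) $ n = G $ n" .
qed

lemma p_supported_fps_cong_0_extend:
  assumes "p_supported (G::'a fps)" "fps_cong (CARD('a) * j + 1) G 0"
  shows "fps_cong (CARD('a) * (j + 1)) G 0"
  unfolding fps_cong_def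
proof (intro allI impI)
  fix n assume n: "n < CARD('a) * (j + 1)"
  show "G $ n = 0 $ n"
  proof (cases "n < CARD('a) * j + 1")
    case False
    have "\<not> CARD('a) dvd n"
    proof
      assume "CARD('a) dvd n"
      then obtain l where "n = CARD('a) * l"
        by blast
      with n False show False
        by (metis Suc_eq_plus1 add_lessD1 le_eq_less_or_eq less_Suc_eq mult_le_cancel1 not_less)
    qed
    then show ?thesis
      using assms(1) by (auto simp: p_supported_def)
  qed (use assms(2) in \<open>simp add: fps_cong_def\<close>)
qed

text \<open>Writing \<open>f = X \<cdot> f' + (f - X \<cdot> f')\<close>, where \<open>f' - 1\<close> and \<open>f - X \<cdot> f'\<close> are series in \<open>X ^ p\<close>.\<close>

lemma Sset_compose_cong:
  assumes f: "(f::'a fps) \<in> Sset" and d: "1 \<le> d" "fps_cong d f fps_X"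
    and r: "1 \<le> r" "fps_cong r g fps_X"
  shows "fps_cong (d + CARD('a) * (r - 1)) (f oo g) (g * fps_deriv f + (f - fps_X * fps_deriv f))"
proof -
  define Df where "Df = fps_deriv f"
  define Rf where "Rf = f - fps_X * Df"
  have g0: "g $ 0 = 0"
    using fps_cong_X_nth_0[OF r] .
  have "f = fps_X * (Df - 1) + fps_X + Rf"
    by (simp add: Rf_def algebra_simps)
  then have "f oo g = (fps_X oo g) * ((Df - 1) oo g) + (fps_X oo g) + (Rf oo g)"
    by (metis fps_compose_add_distrib fps_compose_mult_distrib[OF g0])
  then have comp: "f oo g = g * ((Df - 1) oo g) + g + (Rf oo g)"
    using g0 by simp
  have "fps_cong (d - 1 + CARD('a) * (r - 1)) ((Df - 1) oo g) (Df - 1)"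
    using p_supported_compose[OF p_supported_deriv_minus_1[OF f] fps_cong_deriv_minus_1[OF d(2)] r]
    by (simp add: Df_def)
  then have "fps_cong (1 + (d - 1 + CARD('a) * (r - 1))) (g * (((Df - 1) oo g) - (Df - 1))) 0"
    using fps_cong_0_mult[of 1 g] g0 by (simp add: fps_cong_def fps_cong_iff_diff[symmetric])
  then have "fps_cong (d + CARD('a) * (r - 1)) (g * ((Df - 1) oo g)) (g * (Df - 1))"
    using d(1) by (simp add: fps_cong_iff_diff[of _ "g * _"] algebra_simps)
  moreover have "fps_cong (d + CARD('a) * (r - 1)) (Rf oo g) Rf"
    using p_supported_compose[OF p_supported_minus_X_mult_deriv[OF f] fps_cong_minus_X_mult_deriv[OF d(2)] r]
    by (simp add: Rf_def Df_def)
  ultimately have "fps_cong (d + CARD('a) * (r - 1)) (f oo g) (g * (Df - 1) + g + Rf)"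
    unfolding comp by (intro fps_cong_add fps_cong_refl)
  then show ?thesis
    by (simp add: Df_def Rf_def algebra_simps)
qed

lemma Sset_compose_minus_cong:
  assumes f: "(f::'a fps) \<in> Sset" and D: "1 \<le> D" "fps_cong D f fps_X"
    and r: "2 \<le> r" "fps_cong r P fps_X"
  shows "fps_cong (D + 1) ((f oo P) - P) (f - fps_X)"
proof -
  have "D + 1 \<le> D + CARD('a) * (r - 1)"
    using prime_gt_1_nat[OF prime_card] r(1) by (simp add: Suc_leI)
  then have Taylor: "fps_cong (D + 1) (f oo P) (P * fps_deriv f + (f - fps_X * fps_deriv f))"
    using fps_cong_mono[OF Sset_compose_cong[OF f D _ r(2)]] r(1) by simp
  have "fps_cong (r + (D - 1)) ((P - fps_X) * (fps_deriv f - 1)) 0"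
    using fps_cong_0_mult r(2) fps_cong_deriv_minus_1[OF D(2)] fps_cong_iff_diff by blast
  then have "fps_cong (D + 1) ((P - fps_X) * (fps_deriv f - 1)) 0"
    by (rule fps_cong_mono) (use r(1) D(1) in simp)
  moreover have "(P * fps_deriv f + (f - fps_X * fps_deriv f)) - (P + (f - fps_X))
      = (P - fps_X) * (fps_deriv f - 1)"
    by (simp add: algebra_simps)
  ultimately have "fps_cong (D + 1) (P * fps_deriv f + (f - fps_X * fps_deriv f)) (P + (f - fps_X))"
    by (simp add: fps_cong_iff_diff[of _ "P * _ + _"])
  from fps_cong_diff[OF fps_cong_trans[OF Taylor this] fps_cong_refl[of _ P]] show ?thesis
    by simp
qed

lemma Sset_compose_cong_X:
  assumes f: "(f::'a fps) \<in> Sset" and D: "2 \<le> D" "fps_cong D f fps_X" "fps_cong D g fps_X"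
  shows "fps_cong D (f oo g) fps_X" and "(f oo g) $ D = f $ D + g $ D"
proof -
  have "fps_cong (D + 1) ((f oo g) - g) (f - fps_X)"
    using Sset_compose_minus_cong[OF f _ D(2) D(1,3)] D(1) by simp
  then have diff: "(f oo g) $ k - g $ k = f $ k - fps_X $ k" if "k \<le> D" for k
    using that unfolding fps_cong_def by auto
  show "fps_cong D (f oo g) fps_X"
    unfolding fps_cong_def
  proof (intro allI impI)
    fix k assume "k < D"
    then have "f $ k = fps_X $ k" "g $ k = fps_X $ k"
      using D(2,3) by (auto simp: fps_cong_def)
    with diff[of k] \<open>k < D\<close> show "(f oo g) $ k = fps_X $ k"
      by (simp del: fps_X_nth)
  qed
  show "(f oo g) $ D = f $ D + g $ D"
    using diff[of D] D(1) by (simp add: algebra_simps)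
qed

end

section \<open>Powers in S\<close>

lemma Sgrp_mult [simp]: "f \<otimes>\<^bsub>Sgrp\<^esub> g = f oo g"
  by (simp add: Sgrp_def)

lemma Sgrp_one [simp]: "\<one>\<^bsub>Sgrp\<^esub> = fps_X"
  by (simp add: Sgrp_def)

lemma Sgrp_pow_nth_0: "f $ 0 = 0 \<Longrightarrow> (f [^]\<^bsub>Sgrp\<^esub> (n::nat)) $ 0 = 0"
  by (induction n) simp_all

lemma Sgrp_pow_Suc_left:
  assumes "f $ 0 = 0"
  shows "f [^]\<^bsub>Sgrp\<^esub> Suc n = f oo f [^]\<^bsub>Sgrp\<^esub> n"
proof (induction n)
  case (Suc n)
  have "f [^]\<^bsub>Sgrp\<^esub> Suc (Suc n) = (f oo f [^]\<^bsub>Sgrp\<^esub> n) oo f"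
    using Suc.IH by simp
  also have "\<dots> = f oo (f [^]\<^bsub>Sgrp\<^esub> n oo f)"
    by (rule fps_compose_assoc[symmetric, OF assms Sgrp_pow_nth_0[OF assms]])
  finally show ?case
    by simp
qed (use assms in simp)

lemma Sgrp_pow_add:
  assumes "f $ 0 = 0"
  shows "f [^]\<^bsub>Sgrp\<^esub> (m + n) = f [^]\<^bsub>Sgrp\<^esub> m oo f [^]\<^bsub>Sgrp\<^esub> (n::nat)"
  by (induction n) (simp_all add: fps_compose_assoc[OF assms Sgrp_pow_nth_0[OF assms]])

lemma Sgrp_pow_mult:
  assumes "f $ 0 = 0"
  shows "f [^]\<^bsub>Sgrp\<^esub> (m * n) = (f [^]\<^bsub>Sgrp\<^esub> m) [^]\<^bsub>Sgrp\<^esub> (n::nat)"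
  by (induction n) (simp_all add: Sgrp_pow_add[OF assms] add.commute[of m])

lemma subgroup_Sgrp_subset: "subgroup U Sgrp \<Longrightarrow> U \<subseteq> Sset"
  using subgroup.subset by (fastforce simp: Sgrp_def)

lemma subgroup_Sgrp_pow_closed:
  assumes "subgroup U Sgrp" "f \<in> U"
  shows "f [^]\<^bsub>Sgrp\<^esub> (n::nat) \<in> U"
proof (induction n)
  case 0
  show ?case
    using subgroup.one_closed[OF assms(1)] by simp
next
  case (Suc n)
  show ?case
    using subgroup.m_closed[OF assms(1) Suc.IH assms(2)] by simp
qed

context
  assumes prime_card: "prime CARD('a::{field,finite})"
begin

lemma Sgrp_pow_cong_X:
  assumes w: "(w::'a fps) \<in> Sset" and D: "2 \<le> D" "fps_cong D w fps_X"
  shows "fps_cong D (w [^]\<^bsub>Sgrp\<^esub> m) fps_X \<and> (w [^]\<^bsub>Sgrp\<^esub> m) $ D = of_nat m * w $ D"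
proof (induction m)
  case (Suc m)
  then show ?case
    using Sset_compose_cong_X[OF prime_card w D(1,2), of "w [^]\<^bsub>Sgrp\<^esub> m"]
    by (simp add: Sgrp_pow_Suc_left[OF Sset_nth_0[OF w]] algebra_simps del: nat_pow_Suc)
qed (use D(1) in simp)

lemma Sgrp_pow_cong_geometric:
  assumes w: "(w::'a fps) \<in> Sset" and d: "2 \<le> d" "fps_cong d w fps_X"
  shows "fps_cong (d + CARD('a) * (d - 1)) (w [^]\<^bsub>Sgrp\<^esub> i)
           (fps_X * fps_deriv w ^ i + (w - fps_X * fps_deriv w) * (\<Sum>l<i. fps_deriv w ^ l))"
    (is "fps_cong ?M _ (?F i)")
proof (induction i)
  case (Suc i)
  have "fps_cong ?M (w oo w [^]\<^bsub>Sgrp\<^esub> i)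
      (w [^]\<^bsub>Sgrp\<^esub> i * fps_deriv w + (w - fps_X * fps_deriv w))"
    using Sset_compose_cong[OF prime_card w _ d(2) _ conjunct1[OF Sgrp_pow_cong_X[OF w d]]] d(1)
    by simp
  also have "fps_cong ?M \<dots> (?F i * fps_deriv w + (w - fps_X * fps_deriv w))"
    by (intro fps_cong_add fps_cong_mult Suc.IH fps_cong_refl)
  also have "?F i * fps_deriv w + (w - fps_X * fps_deriv w) = ?F (Suc i)"
    by (simp add: sum.lessThan_Suc_shift sum_distrib_left algebra_simps power_Suc2
        del: sum.lessThan_Suc)
  finally show ?case
    by (simp add: Sgrp_pow_Suc_left[OF Sset_nth_0[OF w]] del: nat_pow_Suc)
qed simp

text \<open>With \<open>E = w' - 1\<close>, Frobenius gives \<open>w' \<^sup>p = 1 + E \<^sup>p\<close> and \<open>1 + w' + \<dots> + w' \<^bsup>p - 1\<^esup> = E \<^bsup>p - 1\<^esup>\<close>.\<close>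

lemma Sgrp_pow_CARD_cong:
  assumes w: "(w::'a fps) \<in> Sset" and j: "1 \<le> j" and w_cong: "fps_cong (CARD('a) * j + 1) w fps_X"
  shows "fps_cong (CARD('a) * (CARD('a) * j) + 1) (w [^]\<^bsub>Sgrp\<^esub> CARD('a)) fps_X \<and>
         (w [^]\<^bsub>Sgrp\<^esub> CARD('a)) $ (CARD('a) * (CARD('a) * j) + 1) = (w $ (CARD('a) * j + 1)) ^ CARD('a)"
proof -
  define q where "q = CARD('a)"
  define E where "E = fps_deriv w - 1"
  define E' where "E' = fps_shift (q * j) E"
  define R where "R = w - fps_X * fps_deriv w"
  define N where "N = q * (q * j) + 1"
  have q2: "2 \<le> q"
    using prime_ge_2_nat[OF prime_card] by (simp add: q_def)
  have E_cong: "fps_cong (q * j) E 0"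
    using fps_cong_deriv_minus_1[OF w_cong] by (simp add: E_def q_def)
  have R_cong: "fps_cong (q * (j + 1)) R 0"
    using p_supported_fps_cong_0_extend[OF prime_card p_supported_minus_X_mult_deriv[OF prime_card w]]
      fps_cong_minus_X_mult_deriv[OF w_cong] by (simp add: R_def q_def)
  have E_eq: "E = fps_X ^ (q * j) * E'"
    using fps_cong_0_imp_X_power_mult_shift[OF E_cong] by (simp add: E'_def)
  have Dw: "fps_deriv w = E + 1"
    by (simp add: E_def)
  have "N + 1 \<le> q * j + 1 + q * (q * j + 1 - 1)"
    using q2 j by (simp add: N_def)
  then have "fps_cong (N + 1) (w [^]\<^bsub>Sgrp\<^esub> q) (fps_X * fps_deriv w ^ q + R * (\<Sum>l<q. fps_deriv w ^ l))"
    using fps_cong_mono[OF Sgrp_pow_cong_geometric[OF w _ w_cong]] q2 j by (simp add: R_def q_def)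
  moreover have "fps_deriv w ^ q = E ^ q + 1"
    using fps_add_power_CARD[OF prime_card, of E 1] by (simp add: Dw q_def)
  moreover have "(\<Sum>l<q. fps_deriv w ^ l) = E ^ (q - 1)"
    using sum_power_plus_1_CARD[OF prime_card, of E] by (simp add: Dw q_def)
  ultimately have "fps_cong (N + 1) (w [^]\<^bsub>Sgrp\<^esub> q) (fps_X * (E ^ q + 1) + R * E ^ (q - 1))"
    by simp
  moreover have "N + 1 \<le> q * (j + 1) + q * j * (q - 1)"
    using q2 by (cases q) (simp_all add: N_def algebra_simps)
  then have "fps_cong (N + 1) (R * E ^ (q - 1)) 0"
    using fps_cong_mono[OF fps_cong_0_mult[OF R_cong fps_cong_0_power[OF E_cong]]] by blast
  then have "fps_cong (N + 1) (fps_X * (E ^ q + 1) + R * E ^ (q - 1)) (fps_X * (E ^ q + 1) + 0)"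
    by (rule fps_cong_add[OF fps_cong_refl])
  ultimately have "fps_cong (N + 1) (w [^]\<^bsub>Sgrp\<^esub> q) (fps_X + fps_X * E ^ q)"
    by (simp add: distrib_left add.commute fps_cong_trans)
  moreover have "fps_X * E ^ q = fps_X ^ N * E' ^ q"
    unfolding E_eq power_mult_distrib power_mult[symmetric] N_def
    by (simp add: mult.commute[of "q * j"] mult.assoc)
  moreover have "E' $ 0 = w $ (q * j + 1)"
    using of_nat_CARD_mult_plus_1[OF prime_card, of j] j q2 by (simp add: E'_def E_def q_def)
  moreover have "N \<noteq> 1"
    using q2 j by (simp add: N_def)
  ultimately show ?thesis
    unfolding fps_cong_def q_def[symmetric] N_def[symmetric]
    by (auto simp: fps_X_power_mult_nth fps_power_zeroth)
qed

lemma Sgrp_pow_CARD_power_cong: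
  assumes U: "subgroup U Sgrp" and v: "(v::'a fps) \<in> U" and j: "1 \<le> j"
    and v_cong: "fps_cong (CARD('a) * j + 1) v fps_X" and c: "v $ (CARD('a) * j + 1) = c"
  shows "fps_cong (CARD('a) ^ (e + 1) * j + 1) (v [^]\<^bsub>Sgrp\<^esub> CARD('a) ^ e) fps_X \<and>
         (v [^]\<^bsub>Sgrp\<^esub> CARD('a) ^ e) $ (CARD('a) ^ (e + 1) * j + 1) = c ^ (CARD('a) ^ e)"
proof (induction e)
  case 0
  have "v $ 0 = 0"
    using Sset_nth_0 subgroup_Sgrp_subset[OF U] v by blast
  then show ?case
    using v_cong c by simp
next
  case (Suc e)
  define w where "w = v [^]\<^bsub>Sgrp\<^esub> CARD('a) ^ e"
  have "w \<in> Sset"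
    using subgroup_Sgrp_pow_closed[OF U v] subgroup_Sgrp_subset[OF U] by (auto simp: w_def)
  moreover have "1 \<le> CARD('a) ^ e * j"
    using j prime_gt_0_nat[OF prime_card] by simp
  moreover have "CARD('a) ^ (e + 1) * j = CARD('a) * (CARD('a) ^ e * j)"
    by simp
  ultimately have "fps_cong (CARD('a) * (CARD('a) * (CARD('a) ^ e * j)) + 1) (w [^]\<^bsub>Sgrp\<^esub> CARD('a)) fps_X \<and>
      (w [^]\<^bsub>Sgrp\<^esub> CARD('a)) $ (CARD('a) * (CARD('a) * (CARD('a) ^ e * j)) + 1) = (c ^ CARD('a) ^ e) ^ CARD('a)"
    using Sgrp_pow_CARD_cong[of w "CARD('a) ^ e * j"] Suc.IH
    by (simp add: w_def mult.assoc)
  moreover have "w [^]\<^bsub>Sgrp\<^esub> CARD('a) = v [^]\<^bsub>Sgrp\<^esub> CARD('a) ^ Suc e"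
    using Sgrp_pow_mult[OF Sset_nth_0, of v "CARD('a) ^ e" "CARD('a)"] subgroup_Sgrp_subset[OF U] v
    by (auto simp: w_def power_Suc2 simp del: power_Suc)
  ultimately show ?case
    by (simp add: power_mult[symmetric] power_Suc2 ac_simps del: power_Suc)
qed

lemma Sgrp_pow_ne_X:
  assumes U: "subgroup U Sgrp" and v: "(v::'a fps) \<in> U" and j: "1 \<le> j"
    and v_cong: "fps_cong (CARD('a) * j + 1) v fps_X" and c: "v $ (CARD('a) * j + 1) \<noteq> 0"
    and n: "0 < (n::nat)"
  shows "v [^]\<^bsub>Sgrp\<^esub> n \<noteq> fps_X"
proof
  assume v_pow: "v [^]\<^bsub>Sgrp\<^esub> n = fps_X"
  define e where "e = multiplicity CARD('a) n"
  have "\<not> is_unit CARD('a)"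
    using prime_card not_prime_unit by blast
  then obtain m where nm: "n = CARD('a) ^ e * m" and m: "\<not> CARD('a) dvd m"
    using multiplicity_decompose'[of n "CARD('a)"] n unfolding e_def by blast
  define w where "w = v [^]\<^bsub>Sgrp\<^esub> CARD('a) ^ e"
  define D where "D = CARD('a) ^ (e + 1) * j + 1"
  have v_Sset: "v \<in> Sset"
    using subgroup_Sgrp_subset[OF U] v by blast
  have "w \<in> Sset"
    using subgroup_Sgrp_pow_closed[OF U v] subgroup_Sgrp_subset[OF U] by (auto simp: w_def)
  moreover have "2 \<le> D"
    using j prime_gt_0_nat[OF prime_card] by (simp add: D_def)
  moreover have "fps_cong D w fps_X" and w_D: "w $ D = (v $ (CARD('a) * j + 1)) ^ (CARD('a) ^ e)"
    using Sgrp_pow_CARD_power_cong[OF U v j v_cong refl] by (simp_all add: w_def D_def)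
  ultimately have "(w [^]\<^bsub>Sgrp\<^esub> m) $ D = of_nat m * w $ D" and "2 \<le> D"
    using Sgrp_pow_cong_X by blast+
  moreover have "(of_nat m :: 'a) \<noteq> 0"
    using m of_nat_eq_0_iff_CARD_dvd[OF prime_card] by simp
  moreover have "w [^]\<^bsub>Sgrp\<^esub> m = fps_X"
    using v_pow Sgrp_pow_mult[OF Sset_nth_0[OF v_Sset]] by (simp add: w_def nm)
  ultimately show False
    using c w_D by simp
qed

end

section \<open>Commutators with the elements \<open>X + c X \<^bsup>pm + 1\<^esup>\<close>\<close>

definition X_plus_monom :: "'b::comm_ring_1 \<Rightarrow> nat \<Rightarrow> 'b fps" where
  "X_plus_monom c n = fps_X + fps_const c * fps_X ^ n"

lemma X_plus_monom_nth:
  "X_plus_monom c n $ i = (if i = 1 then 1 else 0) + (if i = n then c else 0)"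
  by (simp add: X_plus_monom_def fps_X_power_mult_nth)

lemma X_plus_monom_compose:
  "(h::'b::idom fps) $ 0 = 0 \<Longrightarrow> X_plus_monom c n oo h = h + fps_const c * h ^ n"
  by (simp add: X_plus_monom_def fps_compose_add_distrib fps_compose_mult_distrib
      fps_compose_power[symmetric])

lemma X_plus_monom_cong_X: "fps_cong n (X_plus_monom c n) fps_X"
  by (simp add: fps_cong_def X_plus_monom_nth)

lemma Sset_cong_X_if_compose_minus_cong_0:
  assumes z: "(z::'a::{field,finite} fps) \<in> Sset" and prime_card: "prime CARD('a)"
    and P: "fps_cong 2 P fps_X" and K: "2 \<le> K" and zP: "fps_cong K ((z oo P) - P) 0"
  shows "fps_cong K z fps_X \<and> z $ K = ((z oo P) - P) $ K"
proof -
  have coeff_eq: "z $ D = ((z oo P) - P) $ D" if "2 \<le> D" "fps_cong D z fps_X" for D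
  proof -
    have "fps_cong (D + 1) ((z oo P) - P) (z - fps_X)"
      using Sset_compose_minus_cong[OF prime_card z _ that(2) _ P] that(1) by simp
    then show ?thesis
      using that(1) by (simp add: fps_cong_def)
  qed
  have "fps_cong D z fps_X" if "2 \<le> D" "D \<le> K" for D
    using that
  proof (induction D rule: dec_induct)
    case base
    show ?case
      using Sset_nth_0[OF z] Sset_nth_1[OF z] by (auto simp: fps_cong_def less_2_cases_iff)
  next
    case (step D)
    have IH: "fps_cong D z fps_X"
      using step by simp
    have "z $ D = 0"
      using coeff_eq[OF step.hyps(1) IH] zP step.prems by (simp add: fps_cong_def)
    then show ?case
      using IH step.hyps(1) by (auto simp: fps_cong_def less_Suc_eq)
  qed
  then show ?thesis
    using coeff_eq[of K] K by simp
qed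

context
  assumes prime_card: "prime CARD('a::{field,finite})"
begin

lemma deriv_X_plus_monom:
  "fps_deriv (X_plus_monom (c::'a) (CARD('a) * m + 1)) = 1 + fps_const c * fps_X ^ (CARD('a) * m)"
  using of_nat_CARD_mult_plus_1[OF prime_card, of m]
  by (intro fps_ext) (auto simp: X_plus_monom_def fps_X_power_mult_nth simp del: power_Suc)

lemma X_plus_monom_in_Snbhd:
  assumes "1 \<le> m" "N \<le> CARD('a) * m + 1"
  shows "X_plus_monom (c::'a) (CARD('a) * m + 1) \<in> Snbhd N"
proof -
  have "2 \<le> CARD('a) * m"
    using prime_ge_2_nat[OF prime_card] assms(1) by (metis mult_le_mono nat_mult_1_right)
  moreover have "(CARD('a) * m + 1) mod CARD('a) = 1"
    using prime_ge_2_nat[OF prime_card] by (simp add: mod_Suc)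
  ultimately show ?thesis
    using assms(2) by (auto simp: Snbhd_def Sset_def X_plus_monom_nth)
qed

lemma power_CARD_mult_minus_cong:
  assumes h0: "(h::'a fps) $ 0 = 0" and h_cong: "fps_cong (CARD('a) * k) h fps_X" and m: "2 \<le> m"
  shows "fps_cong (2 * (CARD('a) * k * CARD('a)) + CARD('a) * (m - 2))
           (h ^ (CARD('a) * m) - fps_X ^ (CARD('a) * m)
              - of_nat m * fps_X ^ (CARD('a) * (m - 1)) * (h - fps_X) ^ CARD('a)) 0"
proof -
  define q where "q = CARD('a)"
  have frob: "h ^ q - fps_X ^ q = (h - fps_X) ^ q"
    using fps_add_power_CARD[OF prime_card, of "h - fps_X" fps_X] by (simp add: q_def)
  have "fps_cong (q * k) (h - fps_X) 0"
    using h_cong by (simp add: fps_cong_iff_diff[symmetric] q_def)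
  then have "fps_cong (q * k * q) (h ^ q - fps_X ^ q) 0"
    unfolding frob by (rule fps_cong_0_power)
  moreover have "fps_cong q (h ^ q) 0"
    using fps_cong_0_power[of 1 h q] h0 by (simp add: fps_cong_def)
  moreover have "fps_cong q ((fps_X :: 'a fps) ^ q) 0"
    by (simp add: fps_cong_def)
  ultimately have "fps_cong (2 * (q * k * q) + q * (m - 2))
      ((h ^ q) ^ (m - 2 + 2) - (fps_X ^ q) ^ (m - 2 + 2)
         - of_nat (m - 2 + 2) * (fps_X ^ q) ^ (m - 2 + 1) * (h ^ q - fps_X ^ q)) 0"
    by (rule fps_cong_0_power_diff_linear)
  moreover have "m - 2 + 2 = m" "m - 2 + 1 = m - 1"
    using m by auto
  ultimately show ?thesis
    unfolding q_def[symmetric] frob by (simp only: power_mult)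
qed

text \<open>Expanding \<open>h \<^bsup>pm\<^esup> = (X \<^sup>p + (h - X) \<^sup>p) \<^sup>m\<close> to first order in \<open>(h - X) \<^sup>p\<close>.\<close>

lemma power_CARD_mult_cong:
  assumes h0: "(h::'a fps) $ 0 = 0" and h_cong: "fps_cong (CARD('a) * k) h fps_X"
    and k: "1 \<le> k" and m: "2 \<le> m"
  shows "fps_cong (CARD('a) * (m + CARD('a) * k - 1) + 1) (h ^ (CARD('a) * m))
           (fps_X ^ (CARD('a) * m) + fps_const (of_nat m * (h $ (CARD('a) * k)) ^ CARD('a))
              * fps_X ^ (CARD('a) * (m + CARD('a) * k - 1)))"
proof -
  define q where "q = CARD('a)"
  define J where "J = q * (m + q * k - 1)"
  define H where "H = fps_shift (q * k) (h - fps_X)"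
  have q2: "2 \<le> q"
    using prime_ge_2_nat[OF prime_card] by (simp add: q_def)
  have "fps_cong (q * k) (h - fps_X) 0"
    using h_cong by (simp add: fps_cong_iff_diff[symmetric] q_def)
  then have H: "h - fps_X = fps_X ^ (q * k) * H"
    by (simp add: H_def fps_cong_0_imp_X_power_mult_shift)
  have "m + q * k - 1 = (m - 1) + q * k"
    using m by simp
  then have J_eq: "J = q * (m - 1) + q * k * q"
    by (simp add: J_def algebra_simps)
  have "J + 1 \<le> 2 * (q * k * q) + q * (m - 2)"
  proof -
    have "2 \<le> k * q"
      using q2 k by (metis le_trans mult_le_mono1 mult_1)
    then have "q * 2 \<le> q * (k * q)"
      by (rule mult_le_mono2)
    then have "q + 2 \<le> q * (k * q)"
      using q2 by linarith
    then have "q + 2 \<le> q * k * q"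
      by (simp only: mult.assoc)
    moreover have "q * (m - 1) = q * (m - 2) + q"
      using m by (simp add: algebra_simps flip: mult_Suc_right)
    ultimately show ?thesis
      unfolding J_eq by linarith
  qed
  with power_CARD_mult_minus_cong[OF h0 h_cong m]
  have "fps_cong (J + 1) (h ^ (q * m))
      (fps_X ^ (q * m) + of_nat m * (fps_X ^ (q * (m - 1)) * (h - fps_X) ^ q))"
    by (simp add: fps_cong_iff_diff[of _ "h ^ _"] fps_cong_mono algebra_simps q_def)
  also have "fps_X ^ (q * (m - 1)) * (h - fps_X) ^ q = fps_X ^ J * H ^ q"
    unfolding H J_eq by (simp add: power_mult_distrib power_mult power_add mult.assoc)
  also have "fps_cong (J + 1) (fps_X ^ (q * m) + of_nat m * (fps_X ^ J * H ^ q))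
      (fps_X ^ (q * m) + of_nat m * (fps_const ((H $ 0) ^ q) * fps_X ^ J))"
    using fps_cong_X_power_mult_lowest[of J "H ^ q"]
    by (intro fps_cong_add[OF fps_cong_refl] fps_cong_mult[OF fps_cong_refl]) (simp add: fps_power_zeroth)
  also have "H $ 0 = h $ (q * k)"
    using q2 k by (simp add: H_def)
  finally show ?thesis
    by (simp add: J_def q_def fps_of_nat mult.assoc flip: fps_const_mult)
qed

end

context
  fixes h :: "'a::{field,finite} fps" and k m :: nat and c :: 'a
  assumes prime_card: "prime CARD('a)" and h: "h \<in> Sset" and k: "1 \<le> k"
    and h_cong: "fps_cong (CARD('a) * k) h fps_X" and m: "k \<le> m" "2 \<le> m"
begin

lemma compose_X_plus_monom_cong:
  "fps_cong (CARD('a) * (m + k) + 1) (h oo X_plus_monom c (CARD('a) * m + 1))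
     (h + fps_const c * fps_X ^ (CARD('a) * m + 1) * fps_deriv h)"
proof -
  define q where "q = CARD('a)"
  define u where "u = X_plus_monom c (q * m + 1)"
  have q2: "2 \<le> q"
    using prime_ge_2_nat[OF prime_card] by (simp add: q_def)
  have Taylor: "fps_cong (q * k + q * (q * m + 1 - 1)) (h oo u)
      (u * fps_deriv h + (h - fps_X * fps_deriv h))"
    using Sset_compose_cong[OF prime_card h _ h_cong _ X_plus_monom_cong_X[of "q * m + 1" c]] k
    by (simp add: q_def u_def)
  have "2 * (q * m) \<le> q * (q * m)"
    using mult_le_mono1[OF q2] .
  moreover have "1 \<le> q * m" "q * (m + k) = q * m + q * k" "q * (q * m + 1 - 1) = q * (q * m)"
    using q2 m by (simp_all add: algebra_simps)
  ultimately have "q * (m + k) + 1 \<le> q * k + q * (q * m + 1 - 1)"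
    by linarith
  from fps_cong_mono[OF Taylor this] show ?thesis
    by (simp add: u_def q_def X_plus_monom_def algebra_simps)
qed

lemma X_plus_monom_compose_cong:
  "fps_cong (CARD('a) * (m + k) + 1) (X_plus_monom c (CARD('a) * m + 1) oo h)
     (h + fps_const c * h * fps_X ^ (CARD('a) * m))"
proof -
  define q where "q = CARD('a)"
  define J where "J = q * (m + q * k - 1)"
  have q2: "2 \<le> q"
    using prime_ge_2_nat[OF prime_card] by (simp add: q_def)
  have h0: "h $ 0 = 0"
    using Sset_nth_0[OF h] .
  have "fps_cong J (h ^ (q * m)) (fps_X ^ (q * m))"
  proof -
    define E where "E = fps_const (of_nat m * (h $ (q * k)) ^ q) * fps_X ^ J"
    have "fps_cong J (h ^ (q * m)) (fps_X ^ (q * m) + E)"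
      using fps_cong_mono[OF power_CARD_mult_cong[OF prime_card h0 h_cong k m(2)], of J]
      by (simp add: E_def J_def q_def)
    also have "fps_cong J E 0"
      using fps_cong_0_mult_left[OF fps_cong_0_X_power_mult[of J 1]] by (simp add: E_def)
    then have "fps_cong J (fps_X ^ (q * m) + E) (fps_X ^ (q * m) + 0)"
      by (rule fps_cong_add[OF fps_cong_refl])
    finally show ?thesis
      by simp
  qed
  then have "fps_cong (1 + J) (h * (h ^ (q * m) - fps_X ^ (q * m))) 0"
    using fps_cong_0_mult[of 1 h J] h0 by (simp add: fps_cong_def fps_cong_iff_diff[symmetric])
  then have "fps_cong (1 + J) (fps_const c * (h * (h ^ (q * m) - fps_X ^ (q * m)))) 0"
    by (rule fps_cong_0_mult_left)
  moreover have "q * (m + k) + 1 \<le> 1 + J"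
  proof -
    have "k + 1 \<le> q * k"
      using q2 k mult_le_mono1[of 2 q k] by linarith
    then have "q * (m + k) \<le> q * (m + q * k - 1)"
      by (intro mult_le_mono2) simp
    then show ?thesis
      by (simp add: J_def)
  qed
  moreover have "(X_plus_monom c (q * m + 1) oo h) - (h + fps_const c * h * fps_X ^ (q * m))
      = fps_const c * (h * (h ^ (q * m) - fps_X ^ (q * m)))"
    by (subst X_plus_monom_compose[OF h0]) (simp add: algebra_simps)
  ultimately show ?thesis
    unfolding q_def using fps_cong_mono fps_cong_iff_diff by metis
qed

lemma X_plus_monom_compose_cong_X:
  "fps_cong (CARD('a) * k) (X_plus_monom c (CARD('a) * m + 1) oo h) fps_X"
proof -
  have "fps_cong (CARD('a) * m) (fps_const c * h * fps_X ^ (CARD('a) * m)) 0"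
    using fps_cong_0_mult_left[OF fps_cong_0_X_power_mult[of "CARD('a) * m" 1], of "fps_const c * h"]
    by (simp add: mult.assoc)
  then have "fps_cong (CARD('a) * k) (fps_const c * h * fps_X ^ (CARD('a) * m)) 0"
    by (rule fps_cong_mono) (use m(1) in simp)
  then have "fps_cong (CARD('a) * k) (h + fps_const c * h * fps_X ^ (CARD('a) * m)) (fps_X + 0)"
    by (rule fps_cong_add[OF h_cong])
  moreover have "CARD('a) * k \<le> CARD('a) * (m + k) + 1"
    by (simp add: distrib_left)
  then have "fps_cong (CARD('a) * k) (X_plus_monom c (CARD('a) * m + 1) oo h)
      (h + fps_const c * h * fps_X ^ (CARD('a) * m))"
    by (rule fps_cong_mono[OF X_plus_monom_compose_cong])
  ultimately show ?thesis
    using fps_cong_trans by fastforce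
qed

text \<open>Both compositions agree with \<open>h\<close> to first order, and differ by \<open>-c X \<^bsup>pm\<^esup> (h - X h')\<close>.\<close>

lemma compose_X_plus_monom_diff_cong:
  "fps_cong (CARD('a) * (m + k))
     ((h oo X_plus_monom c (CARD('a) * m + 1)) - (X_plus_monom c (CARD('a) * m + 1) oo h)) 0 \<and>
   ((h oo X_plus_monom c (CARD('a) * m + 1)) - (X_plus_monom c (CARD('a) * m + 1) oo h))
     $ (CARD('a) * (m + k)) = - c * h $ (CARD('a) * k)"
proof -
  define q where "q = CARD('a)"
  define u where "u = X_plus_monom c (q * m + 1)"
  define R where "R = h - fps_X * fps_deriv h"
  define K where "K = q * (m + k)"
  have qk: "2 \<le> q * k"
    using mult_le_mono[OF prime_ge_2_nat[OF prime_card] k] by (simp add: q_def)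
  have "fps_cong (K + 1) ((h oo u) - (u oo h))
      ((h + fps_const c * fps_X ^ (q * m + 1) * fps_deriv h) - (h + fps_const c * h * fps_X ^ (q * m)))"
    using fps_cong_diff[OF compose_X_plus_monom_cong X_plus_monom_compose_cong]
    unfolding K_def u_def q_def .
  moreover have "(h + fps_const c * fps_X ^ (q * m + 1) * fps_deriv h) - (h + fps_const c * h * fps_X ^ (q * m))
      = - (fps_const c * (fps_X ^ (q * m) * R))"
    by (simp add: R_def algebra_simps)
  ultimately have "fps_cong (K + 1) ((h oo u) - (u oo h)) (- (fps_const c * (fps_X ^ (q * m) * R)))"
    by simp
  then have coeff: "((h oo u) - (u oo h)) $ n = - (c * (if n < q * m then 0 else R $ (n - q * m)))"
    if "n \<le> K" for n
    using that unfolding fps_cong_def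
    by (simp only: less_Suc_eq_le Suc_eq_plus1[symmetric] fps_neg_nth fps_mult_left_const_nth fps_X_power_mult_nth)
  have R_cong: "fps_cong (q * k) R 0"
    using fps_cong_minus_X_mult_deriv[OF h_cong] by (simp add: R_def q_def)
  have "R $ (n - q * m) = 0" if "n < K" "\<not> n < q * m" for n
    using R_cong that by (simp add: fps_cong_def K_def distrib_left)
  then have "fps_cong K ((h oo u) - (u oo h)) 0"
    using coeff by (simp add: fps_cong_def)
  moreover have "(of_nat (q * k) :: 'a) = 0"
    using of_nat_eq_0_iff_CARD_dvd[OF prime_card] by (simp add: q_def)
  then have "R $ (q * k) = h $ (q * k)"
    using qk by (cases "q * k") (auto simp: R_def)
  moreover have "K - q * m = q * k" "\<not> K < q * m"
    by (simp_all add: K_def distrib_left)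
  ultimately show ?thesis
    using coeff[of K] by (simp add: K_def u_def q_def)
qed

text \<open>The hypothesis on \<open>z\<close> says that \<open>z\<close> is the commutator \<open>(h \<circ> u) \<circ> (u \<circ> h)\<inverse>\<close>.\<close>

lemma commutator_cong_X:
  assumes z: "z \<in> Sset" and zc: "z oo (X_plus_monom c (CARD('a) * m + 1) oo h)
      = h oo X_plus_monom c (CARD('a) * m + 1)"
  shows "fps_cong (CARD('a) * (m + k)) z fps_X \<and> z $ (CARD('a) * (m + k)) = - c * h $ (CARD('a) * k)"
proof -
  define P where "P = X_plus_monom c (CARD('a) * m + 1) oo h"
  have "2 \<le> CARD('a) * k"
    using mult_le_mono[OF prime_ge_2_nat[OF prime_card] k] by simp
  then have "fps_cong 2 P fps_X"
    using fps_cong_mono[OF X_plus_monom_compose_cong_X] by (simp only: P_def)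
  moreover have "m + k \<le> CARD('a) * (m + k)"
    by simp
  then have "2 \<le> CARD('a) * (m + k)"
    using m by linarith
  ultimately show ?thesis
    using Sset_cong_X_if_compose_minus_cong_0[OF z prime_card, of P "CARD('a) * (m + k)"]
      compose_X_plus_monom_diff_cong zc by (simp add: P_def)
qed

lemma deriv_compose_X_plus_monom_cong:
  "fps_cong (CARD('a) * (m + CARD('a) * k - 1) + 1)
     (fps_deriv h oo X_plus_monom c (CARD('a) * m + 1)) (fps_deriv h)"
proof -
  define q where "q = CARD('a)"
  obtain d where d: "m = k + d"
    using m(1) le_Suc_ex by blast
  have q2: "2 \<le> q"
    using prime_ge_2_nat[OF prime_card] by (simp add: q_def)
  have "q * (m + q * k - 1) + q = q * (m + q * k - 1 + 1)"
    by simp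
  also have "m + q * k - 1 + 1 = m + q * k"
    using mult_le_mono[OF q2 k] by simp
  finally have "q * (m + q * k - 1) + q = q * m + q * (q * k)"
    by (simp add: distrib_left)
  moreover have "q * (q * m) = q * (q * k) + q * (q * d)" "q * m = q * k + q * d"
    "q * (q * m + 1 - 1) = q * (q * m)" "q * d \<le> q * (q * d)" "2 \<le> q * k"
    using q2 mult_le_mono[OF q2 k] by (simp_all add: d algebra_simps)
  ultimately have "q * (m + q * k - 1) + 1 \<le> q * k - 1 + q * (q * m + 1 - 1)"
    using q2 by linarith
  moreover have "fps_cong (q * k - 1 + q * (q * m + 1 - 1))
      ((fps_deriv h - 1) oo X_plus_monom c (q * m + 1)) (fps_deriv h - 1)"
    using p_supported_compose[OF prime_card p_supported_deriv_minus_1[OF prime_card h]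
        fps_cong_deriv_minus_1[OF h_cong] _ X_plus_monom_cong_X[of "q * m + 1" c]]
    by (simp add: q_def)
  ultimately have "fps_cong (q * (m + q * k - 1) + 1)
      ((fps_deriv h - 1) oo X_plus_monom c (q * m + 1)) (fps_deriv h - 1)"
    by (rule fps_cong_mono[rotated])
  from fps_cong_add[OF this fps_cong_refl[of _ 1]] show ?thesis
    by (simp add: fps_compose_sub_distrib q_def)
qed

lemma deriv_X_plus_monom_compose_cong:
  "fps_cong (CARD('a) * (m + CARD('a) * k - 1) + 1)
     (fps_deriv (X_plus_monom c (CARD('a) * m + 1)) oo h)
     (fps_deriv (X_plus_monom c (CARD('a) * m + 1))
        + fps_const (c * of_nat m * (h $ (CARD('a) * k)) ^ CARD('a)) * fps_X ^ (CARD('a) * (m + CARD('a) * k - 1)))"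
proof -
  have h0: "h $ 0 = 0"
    using Sset_nth_0[OF h] .
  have "fps_deriv (X_plus_monom c (CARD('a) * m + 1)) oo h = 1 + fps_const c * h ^ (CARD('a) * m)"
    unfolding deriv_X_plus_monom[OF prime_card]
    using h0 by (simp add: fps_compose_add_distrib fps_compose_mult_distrib fps_compose_power[symmetric])
  moreover have "fps_cong (CARD('a) * (m + CARD('a) * k - 1) + 1) (1 + fps_const c * h ^ (CARD('a) * m))
      (1 + fps_const c * (fps_X ^ (CARD('a) * m) + fps_const (of_nat m * (h $ (CARD('a) * k)) ^ CARD('a))
         * fps_X ^ (CARD('a) * (m + CARD('a) * k - 1))))"
    using power_CARD_mult_cong[OF prime_card h0 h_cong k m(2)]
    by (intro fps_cong_add[OF fps_cong_refl] fps_cong_mult[OF fps_cong_refl])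
  moreover have "1 + fps_const c * (fps_X ^ (CARD('a) * m) + fps_const (of_nat m * (h $ (CARD('a) * k)) ^ CARD('a))
         * fps_X ^ (CARD('a) * (m + CARD('a) * k - 1)))
      = fps_deriv (X_plus_monom c (CARD('a) * m + 1))
        + fps_const (c * of_nat m * (h $ (CARD('a) * k)) ^ CARD('a)) * fps_X ^ (CARD('a) * (m + CARD('a) * k - 1))"
    unfolding deriv_X_plus_monom[OF prime_card] by (simp add: distrib_left mult.assoc add.assoc fps_const_mult)
  ultimately show ?thesis
    by (simp only:)
qed

lemma commutator_deriv_compose_cong:
  assumes z: "z \<in> Sset" and zc: "z oo (X_plus_monom c (CARD('a) * m + 1) oo h)
      = h oo X_plus_monom c (CARD('a) * m + 1)"
  shows "fps_cong (CARD('a) * (m + CARD('a) * k - 1) + 1)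
     (fps_deriv z oo (X_plus_monom c (CARD('a) * m + 1) oo h)) (fps_deriv z)"
proof -
  define q where "q = CARD('a)"
  have q2: "2 \<le> q" and qk: "2 \<le> q * k"
    using prime_ge_2_nat[OF prime_card] mult_le_mono[OF _ k, of 2 q] by (simp_all add: q_def)
  have "q * (m + q * k - 1) + 1 \<le> q * (m + k) - 1 + q * (q * k - 1)"
    using qk by (simp add: algebra_simps right_diff_distrib')
  moreover have "fps_cong (q * (m + k) - 1 + q * (q * k - 1))
      ((fps_deriv z - 1) oo (X_plus_monom c (q * m + 1) oo h)) (fps_deriv z - 1)"
    using p_supported_compose[OF prime_card p_supported_deriv_minus_1[OF prime_card z]
        fps_cong_deriv_minus_1[OF conjunct1[OF commutator_cong_X[OF z zc]]] _ X_plus_monom_compose_cong_X] k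
    by (simp add: q_def)
  ultimately have "fps_cong (q * (m + q * k - 1) + 1)
      ((fps_deriv z - 1) oo (X_plus_monom c (q * m + 1) oo h)) (fps_deriv z - 1)"
    by (rule fps_cong_mono[rotated])
  from fps_cong_add[OF this fps_cong_refl[of _ 1]] show ?thesis
    by (simp add: fps_compose_sub_distrib q_def)
qed

text \<open>By the chain rule, \<open>(z' \<circ> P) \<cdot> (u' \<circ> h) \<cdot> h' = (h' \<circ> u) \<cdot> u'\<close> for \<open>P = u \<circ> h\<close>.\<close>

lemma commutator_deriv_cong:
  assumes z: "z \<in> Sset" and zc: "z oo (X_plus_monom c (CARD('a) * m + 1) oo h)
      = h oo X_plus_monom c (CARD('a) * m + 1)"
  shows "fps_cong (CARD('a) * (m + CARD('a) * k - 1) + 1) (fps_deriv z)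
           (1 - fps_const (c * of_nat m * (h $ (CARD('a) * k)) ^ CARD('a))
              * fps_X ^ (CARD('a) * (m + CARD('a) * k - 1)))"
proof -
  define u where "u = X_plus_monom c (CARD('a) * m + 1)"
  define J where "J = CARD('a) * (m + CARD('a) * k - 1)"
  define W where "W = fps_deriv u oo h"
  have h0: "h $ 0 = 0"
    using Sset_nth_0[OF h] .
  have P0: "(u oo h) $ 0 = 0"
    by (simp add: u_def X_plus_monom_nth)
  have "fps_cong (J + 1) (fps_deriv z * (W * fps_deriv h)) ((fps_deriv z oo (u oo h)) * (W * fps_deriv h))"
    using fps_cong_mult[OF fps_cong_sym[OF commutator_deriv_compose_cong[OF z zc]] fps_cong_refl]
    by (simp add: u_def J_def)
  also have "(fps_deriv z oo (u oo h)) * (W * fps_deriv h) = (fps_deriv h oo u) * fps_deriv u"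
    using zc fps_compose_deriv[OF P0, of z] fps_compose_deriv[OF h0, of u]
      fps_compose_deriv[of u h] by (simp add: W_def u_def X_plus_monom_def)
  also have "fps_cong (J + 1) \<dots> (fps_deriv h * fps_deriv u)"
    using fps_cong_mult[OF deriv_compose_X_plus_monom_cong fps_cong_refl] by (simp add: u_def J_def)
  finally have "fps_cong (J + 1) (fps_deriv z * W * fps_deriv h) (fps_deriv u * fps_deriv h)"
    by (simp add: ac_simps)
  then have zW: "fps_cong (J + 1) (fps_deriv z * W) (fps_deriv u)"
    using fps_cong_mult_cancel_right[of "fps_deriv h"] Sset_nth_1[OF h] by simp
  have W0: "W $ 0 = 1"
    using prime_gt_0_nat[OF prime_card] m by (simp add: W_def u_def X_plus_monom_nth)
  have "fps_cong J (fps_const (c * of_nat m * (h $ (CARD('a) * k)) ^ CARD('a)) * fps_X ^ J) 0"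
    using fps_cong_0_mult_left[OF fps_cong_0_X_power_mult[of J 1]] by simp
  from fps_cong_mult_cancel_first_order[OF zW _ this W0] show ?thesis
    using deriv_X_plus_monom_compose_cong unfolding W_def u_def J_def by blast
qed
end

section \<open>Elements of a normal subgroup with leading term of degree \<open>pj + 1\<close>\<close>

lemma (in normal) mult_mult_inv_closed:
  assumes "h \<in> H" "u \<in> carrier G"
  shows "(h \<otimes> u) \<otimes> inv (u \<otimes> h) \<in> H"
proof -
  have h: "h \<in> carrier G"
    using assms(1) subset by blast
  have "(h \<otimes> u) \<otimes> inv (u \<otimes> h) = h \<otimes> (u \<otimes> inv h \<otimes> inv u)"
    using h assms(2) by (simp add: inv_mult_group m_assoc)
  moreover have "u \<otimes> inv h \<otimes> inv u \<in> H"
    using inv_op_closed2[OF assms(2)] assms(1) by simp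
  ultimately show ?thesis
    using assms(1) by simp
qed

lemma Sset_neq_X_cases:
  assumes f: "(f::'a::{field,finite} fps) \<in> Sset" "f \<noteq> fps_X"
  obtains j where "1 \<le> j" "fps_cong (CARD('a) * j + 1) f fps_X" "f $ (CARD('a) * j + 1) \<noteq> 0"
    | k where "1 \<le> k" "fps_cong (CARD('a) * k) f fps_X" "f $ (CARD('a) * k) \<noteq> 0"
proof -
  obtain n where below: "fps_cong n f fps_X" and fn: "f $ n \<noteq> fps_X $ n"
    using fps_neq_obtains_cong_nth_neq[OF f(2)] by blast
  have "n \<noteq> 0"
  proof
    assume "n = 0"
    with fn Sset_nth_0[OF f(1)] show False
      by simp
  qed
  moreover have "n \<noteq> 1"
  proof
    assume "n = 1"
    with fn Sset_nth_1[OF f(1)] show False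
      by simp
  qed
  ultimately have n2: "2 \<le> n" and "f $ n \<noteq> 0"
    using fn by auto
  then have "n mod CARD('a) = 0 \<or> n mod CARD('a) = 1"
    by (intro Sset_nth_nonzero[OF f(1)])
  then show ?thesis
  proof (elim disjE)
    assume "n mod CARD('a) = 0"
    then have n: "CARD('a) * (n div CARD('a)) = n"
      using div_mult_mod_eq[of n "CARD('a)"] by (simp add: mult.commute)
    then have "1 \<le> n div CARD('a)"
      using n2 by (cases "n div CARD('a)") auto
    then show ?thesis
      by (rule that(2)) (use n below \<open>f $ n \<noteq> 0\<close> in simp_all)
  next
    assume "n mod CARD('a) = 1"
    then have n: "CARD('a) * (n div CARD('a)) + 1 = n"
      using div_mult_mod_eq[of n "CARD('a)"] by (simp add: mult.commute)
    then have "1 \<le> n div CARD('a)"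
      using n2 by (cases "n div CARD('a)") auto
    then show ?thesis
      by (rule that(1)) (use n below \<open>f $ n \<noteq> 0\<close> in simp_all)
  qed
qed

text \<open>A coefficient in a degree \<open>D \<equiv> 1 (mod p)\<close> is read off the derivative; one in a degree
  \<open>D \<equiv> 0 (mod p)\<close> is cancelled by composing with an element whose derivative is \<open>1\<close> to the
  relevant order.\<close>

lemma raise_cong_X_step:
  assumes prime_card: "prime CARD('a::{field,finite})" and HS: "H \<subseteq> (Sset :: 'a fps set)"
    and H_mult: "\<And>x y. x \<in> H \<Longrightarrow> y \<in> H \<Longrightarrow> x oo y \<in> H" and E: "fps_cong M E 0"
    and w: "w \<in> H" "2 \<le> D" "D \<le> M" "fps_cong D w fps_X" "fps_cong (M + 1) (fps_deriv w) (1 - E)"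
    and adjust: "CARD('a) dvd D \<Longrightarrow>
       \<exists>y\<in>H. fps_cong D y fps_X \<and> y $ D = - w $ D \<and> fps_cong (M + 1) (fps_deriv y) 1"
  shows "\<exists>w'\<in>H. fps_cong (Suc D) w' fps_X \<and> fps_cong (M + 1) (fps_deriv w') (1 - E)"
proof (cases "CARD('a) dvd D")
  case True
  then obtain y where y: "y \<in> H" "fps_cong D y fps_X" "y $ D = - w $ D" "fps_cong (M + 1) (fps_deriv y) 1"
    using adjust by blast
  have "y \<in> Sset" "w \<in> Sset"
    using y(1) w(1) HS by blast+
  then have "fps_cong (Suc D) (y oo w) fps_X"
    using Sset_compose_cong_X[OF prime_card _ w(2) y(2) w(4)] y(3) w(2)
    by (auto simp: fps_cong_def less_Suc_eq)
  moreover have "fps_deriv (y oo w) = (fps_deriv y oo w) * fps_deriv w"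
    by (rule fps_compose_deriv[OF Sset_nth_0[OF \<open>w \<in> Sset\<close>]])
  then have "fps_cong (M + 1) (fps_deriv (y oo w)) (1 * fps_deriv w)"
    using fps_cong_mult[OF fps_cong_compose_left[OF y(4)] fps_cong_refl] by simp
  ultimately show ?thesis
    using H_mult[OF y(1) w(1)] w(5) fps_cong_trans by fastforce
next
  case False
  have wS: "w \<in> Sset"
    using w(1) HS by blast
  have "w $ D = 0"
  proof (rule ccontr)
    assume nz: "w $ D \<noteq> 0"
    then have "D mod CARD('a) = 1"
      using Sset_nth_nonzero[OF wS nz w(2)] False by auto
    then have "w $ D = fps_deriv w $ (D - 1)"
      using of_nat_mod_CARD[OF prime_card, of D] w(2) by (cases D) auto
    also have "\<dots> = (1 - E) $ (D - 1)"
      using w(3,5) by (simp add: fps_cong_def)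
    also have "\<dots> = 0"
      using E w(2,3) by (simp add: fps_cong_def)
    finally show False
      using nz by simp
  qed
  then have "fps_cong (Suc D) w fps_X"
    using w(2,4) by (auto simp: fps_cong_def less_Suc_eq)
  then show ?thesis
    using w(1,5) by blast
qed

lemma raise_cong_X:
  assumes prime_card: "prime CARD('a::{field,finite})" and HS: "H \<subseteq> (Sset :: 'a fps set)"
    and H_mult: "\<And>x y. x \<in> H \<Longrightarrow> y \<in> H \<Longrightarrow> x oo y \<in> H" and E: "fps_cong M E 0"
    and w0: "w0 \<in> H" "2 \<le> D0" "D0 \<le> M + 1" "fps_cong D0 w0 fps_X" "fps_cong (M + 1) (fps_deriv w0) (1 - E)"
    and adjust: "\<And>D t. D0 \<le> D \<Longrightarrow> D \<le> M \<Longrightarrow> CARD('a) dvd D \<Longrightarrow>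
       \<exists>y\<in>H. fps_cong D y fps_X \<and> y $ D = t \<and> fps_cong (M + 1) (fps_deriv y) 1"
  shows "\<exists>w\<in>H. fps_cong (M + 1) w fps_X \<and> fps_cong (M + 1) (fps_deriv w) (1 - E)"
proof -
  have "\<exists>w\<in>H. fps_cong D w fps_X \<and> fps_cong (M + 1) (fps_deriv w) (1 - E)"
    if "D0 \<le> D" "D \<le> M + 1" for D
    using that
  proof (induction D rule: dec_induct)
    case base
    show ?case
      using w0 by blast
  next
    case (step D)
    then obtain w where w: "w \<in> H" "fps_cong D w fps_X" "fps_cong (M + 1) (fps_deriv w) (1 - E)"
      by auto
    show ?case
      using raise_cong_X_step[OF prime_card HS H_mult E w(1) _ _ w(2,3)] adjust[OF step.hyps(1)] step w0(2)
      by simp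
  qed
  then show ?thesis
    using w0(3) by blast
qed

context
  fixes U H :: "'a::{field,finite} fps set" and N0 :: nat
  assumes prime_card: "prime CARD('a)" and U: "subgroup U Sgrp" and U_open: "Snbhd N0 \<subseteq> U"
    and H: "normal H (Sgrp\<lparr>carrier := U\<rparr>)"
begin

lemma normal_subset_Sset: "H \<subseteq> Sset"
  using normal.axioms(1)[OF H] subgroup.subset subgroup_Sgrp_subset[OF U] by fastforce

lemma normal_compose_closed: "x \<in> H \<Longrightarrow> y \<in> H \<Longrightarrow> x oo y \<in> H"
  using subgroup.m_closed[OF normal.axioms(1)[OF H]] by (simp add: Sgrp_def)

lemma normal_commutator_cong:
  assumes h: "h \<in> H" "1 \<le> k" "fps_cong (CARD('a) * k) h fps_X"
    and m: "k \<le> m" "2 \<le> m" "N0 \<le> CARD('a) * m + 1"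
  obtains z where "z \<in> H" "fps_cong (CARD('a) * (m + k)) z fps_X"
    "z $ (CARD('a) * (m + k)) = - c * h $ (CARD('a) * k)"
    "fps_cong (CARD('a) * (m + CARD('a) * k - 1) + 1) (fps_deriv z)
       (1 - fps_const (c * of_nat m * (h $ (CARD('a) * k)) ^ CARD('a))
          * fps_X ^ (CARD('a) * (m + CARD('a) * k - 1)))"
proof -
  define G where "G = Sgrp\<lparr>carrier := U\<rparr>"
  interpret normal H G
    using H by (simp add: G_def)
  define u where "u = X_plus_monom c (CARD('a) * m + 1)"
  have "u \<in> carrier G"
    using X_plus_monom_in_Snbhd[OF prime_card _ m(3)] m(2) U_open by (auto simp: u_def G_def)
  moreover have hG: "h \<in> carrier G"
    using h(1) subset by blast
  define z where "z = (h \<otimes>\<^bsub>G\<^esub> u) \<otimes>\<^bsub>G\<^esub> inv\<^bsub>G\<^esub> (u \<otimes>\<^bsub>G\<^esub> h)"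
  have z: "z \<in> H" and zc: "z \<otimes>\<^bsub>G\<^esub> (u \<otimes>\<^bsub>G\<^esub> h) = h \<otimes>\<^bsub>G\<^esub> u"
    using mult_mult_inv_closed[OF h(1)] \<open>u \<in> carrier G\<close> hG by (simp_all add: z_def m_assoc)
  have "z \<in> Sset" "h \<in> Sset"
    using z h(1) normal_subset_Sset by blast+
  moreover have "z oo (u oo h) = h oo u"
    using zc by (simp add: G_def Sgrp_def)
  ultimately show ?thesis
    using that z commutator_cong_X[OF prime_card _ h(2,3) m(1,2)]
      commutator_deriv_cong[OF prime_card _ h(2,3) m(1,2)] unfolding u_def by blast
qed

text \<open>The element \<open>h\<^sub>1\<close> has leading term \<open>-a X \<^bsup>p k\<^sub>1\<^esup>\<close> with \<open>k\<^sub>1 > k\<close>; its commutators have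
  prescribed leading coefficients and, since \<open>k\<^sub>1 > k\<close>, derivative \<open>1\<close> to a higher order than
  the commutators of \<open>h\<close>.\<close>

lemma normal_exists_prescribed_coeff:
  assumes h: "h \<in> H" "1 \<le> k" "fps_cong (CARD('a) * k) h fps_X" "h $ (CARD('a) * k) \<noteq> 0"
    and D: "CARD('a) dvd D" "CARD('a) * (2 * (N0 + 2 * k + 2)) \<le> D"
  shows "\<exists>y\<in>H. fps_cong D y fps_X \<and> y $ D = t \<and>
           fps_cong (D + CARD('a) * (CARD('a) * k - k)) (fps_deriv y) 1"
proof -
  define q where "q = CARD('a)"
  define a where "a = h $ (q * k)"
  define e where "e = N0 + k + 2"
  define k1 where "k1 = k + e"
  obtain K where K: "D = q * K"
    using D(1) by (auto simp: q_def)
  define m2 where "m2 = K - k1"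
  have q2: "2 \<le> q"
    using prime_ge_2_nat[OF prime_card] by (simp add: q_def)
  have "N0 \<le> q * e + 1"
    using q2 mult_le_mono1[of 1 q e] by (simp add: e_def)
  then obtain h1 where h1: "h1 \<in> H" "fps_cong (q * k1) h1 fps_X" "h1 $ (q * k1) = - a"
    using normal_commutator_cong[OF h(1-3), of e 1] by (auto simp: e_def k1_def q_def a_def add.commute)
  have "q * (2 * (N0 + 2 * k + 2)) \<le> q * K"
    using D(2) K by (simp add: q_def)
  moreover have "0 < q"
    using q2 by simp
  ultimately have "2 * (N0 + 2 * k + 2) \<le> K"
    using nat_mult_le_cancel1 by blast
  then have "2 * N0 + 4 * k + 4 \<le> K"
    by simp
  then have m2: "k1 \<le> m2" "2 \<le> m2" "1 \<le> k1" "m2 + k1 = K" "N0 \<le> m2"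
    unfolding m2_def k1_def e_def by linarith+
  have "m2 \<le> q * m2"
    using q2 by simp
  then have "N0 \<le> q * m2 + 1"
    using m2(5) by linarith
  with m2 obtain y where y: "y \<in> H" "fps_cong D y fps_X" "y $ D = - (t / a) * - a"
    "fps_cong (q * (m2 + q * k1 - 1) + 1) (fps_deriv y)
       (1 - fps_const (t / a * of_nat m2 * (- a) ^ q) * fps_X ^ (q * (m2 + q * k1 - 1)))"
    using normal_commutator_cong[OF h1(1) _ h1(2)[unfolded q_def], of m2 "t / a"] h1(3)
    by (auto simp: q_def K)
  have "q * k1 = q * k + q * e" "2 * e \<le> q * e" "k \<le> q * k"
    using q2 mult_le_mono1[OF q2] by (simp_all add: k1_def distrib_left)
  then have "K + (q * k - k) \<le> m2 + q * k1 - 1"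
    using \<open>m2 + k1 = K\<close> by (simp add: k1_def e_def)
  then have "D + q * (q * k - k) \<le> q * (m2 + q * k1 - 1)"
    using mult_le_mono2[of "K + (q * k - k)" _ q] by (simp add: K distrib_left)
  moreover have "fps_cong (q * (m2 + q * k1 - 1)) (fps_deriv y) 1"
  proof -
    have "fps_cong (q * (m2 + q * k1 - 1)) (fps_deriv y)
        (1 - fps_const (t / a * of_nat m2 * (- a) ^ q) * fps_X ^ (q * (m2 + q * k1 - 1)))"
      by (rule fps_cong_mono[OF y(4)]) simp
    also have "fps_cong (q * (m2 + q * k1 - 1))
        (1 - fps_const (t / a * of_nat m2 * (- a) ^ q) * fps_X ^ (q * (m2 + q * k1 - 1))) 1"
      by (simp add: fps_cong_def)
    finally show ?thesis .
  qed
  ultimately have "fps_cong (D + q * (q * k - k)) (fps_deriv y) 1"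
    by (rule fps_cong_mono[rotated])
  moreover have "- (t / a) * - a = t"
    using h(4) by (simp add: a_def q_def)
  ultimately show ?thesis
    using y(1-3) by (auto simp: q_def)
qed

text \<open>Here \<open>m \<equiv> 1 (mod p)\<close>, so the commutator of \<open>h\<close> with \<open>X + X \<^bsup>pm + 1\<^esup>\<close> has derivative
  \<open>1 - a \<^sup>p X \<^bsup>pj\<^esup>\<close> modulo \<open>X \<^bsup>pj + 1\<^esup>\<close>.\<close>

lemma normal_exists_deriv_cong:
  assumes h: "h \<in> H" "1 \<le> k" "fps_cong (CARD('a) * k) h fps_X" "h $ (CARD('a) * k) \<noteq> 0"
  obtains w j where "w \<in> H" "1 \<le> j" "fps_cong (CARD('a) * j + 1) w fps_X"
    "fps_cong (CARD('a) * j + 1) (fps_deriv w)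
       (1 - fps_const ((h $ (CARD('a) * k)) ^ CARD('a)) * fps_X ^ (CARD('a) * j))"
proof -
  define q where "q = CARD('a)"
  define m where "m = q * (N0 + 3 * k + 3) + 1"
  define j where "j = m + q * k - 1"
  define E where "E = fps_const ((h $ (q * k)) ^ q) * fps_X ^ (q * j)"
  have q2: "2 \<le> q"
    using prime_ge_2_nat[OF prime_card] by (simp add: q_def)
  have m_ge: "2 * (N0 + 3 * k + 3) + 1 \<le> m"
    using mult_le_mono1[OF q2, of "N0 + 3 * k + 3"] by (simp add: m_def)
  have "k + 1 \<le> q * k"
    using h(2) mult_le_mono1[OF q2, of k] by linarith
  then have j: "m + k \<le> j" "1 \<le> j" "j + 1 = m + q * k"
    using m_ge by (simp_all add: j_def)
  have "N0 \<le> m" "m \<le> q * m"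
    using m_ge q2 by simp_all
  then have "N0 \<le> q * m + 1"
    by linarith
  moreover have "(of_nat m :: 'a) = 1"
    unfolding m_def q_def by (rule of_nat_CARD_mult_plus_1[OF prime_card])
  ultimately obtain z0 where z0: "z0 \<in> H" "fps_cong (q * (m + k)) z0 fps_X"
      "fps_cong (q * j + 1) (fps_deriv z0) (1 - E)"
    using normal_commutator_cong[OF h(1-3), of m 1] m_ge by (auto simp: q_def j_def E_def)
  have "m + k \<le> q * (m + k)" "q * (m + k) \<le> q * j" "2 \<le> m"
    using q2 j(1) m_ge by simp_all
  then have D0: "2 \<le> q * (m + k)" "q * (m + k) \<le> q * j + 1"
    by linarith+
  have "fps_cong (q * j) E 0"
    using fps_cong_0_mult_left[OF fps_cong_0_X_power_mult[of "q * j" 1]] by (simp add: E_def)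
  moreover have "\<exists>y\<in>H. fps_cong D y fps_X \<and> y $ D = t \<and> fps_cong (q * j + 1) (fps_deriv y) 1"
    if D: "q * (m + k) \<le> D" "q dvd D" for D t
  proof -
    have "2 * (N0 + 2 * k + 2) \<le> m + k"
      using m_ge by simp
    then have "q * (2 * (N0 + 2 * k + 2)) \<le> q * (m + k)"
      by (rule mult_le_mono2)
    moreover have "m + k + (q * k - k) = j + 1"
      using j(3) \<open>k + 1 \<le> q * k\<close> by simp
    then have "q * (m + k) + q * (q * k - k) = q * j + q"
      by (metis distrib_left mult.right_neutral)
    then have "q * j + 1 \<le> D + q * (q * k - k)"
      using q2 D(1) by linarith
    moreover have "CARD('a) * (2 * (N0 + 2 * k + 2)) \<le> D"
      using \<open>q * (2 * (N0 + 2 * k + 2)) \<le> q * (m + k)\<close> D(1) by (simp add: q_def)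
    then obtain y where "y \<in> H" "fps_cong D y fps_X" "y $ D = t"
        "fps_cong (D + q * (q * k - k)) (fps_deriv y) 1"
      using normal_exists_prescribed_coeff[OF h, of D t] D(2) by (auto simp: q_def)
    ultimately show ?thesis
      using fps_cong_mono by blast
  qed
  ultimately show ?thesis
    using raise_cong_X[OF prime_card normal_subset_Sset normal_compose_closed, of "q * j" E z0 "q * (m + k)"]
      z0 D0 j(2) that by (auto simp: q_def E_def)
qed

lemma normal_exists_leading_CARD_mult_plus_1:
  assumes h: "h \<in> H" "1 \<le> k" "fps_cong (CARD('a) * k) h fps_X" "h $ (CARD('a) * k) \<noteq> 0"
  shows "\<exists>v\<in>H. \<exists>j\<ge>1. fps_cong (CARD('a) * j + 1) v fps_X \<and> v $ (CARD('a) * j + 1) \<noteq> 0"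
proof -
  obtain w j where w: "w \<in> H" "1 \<le> j" "fps_cong (CARD('a) * j + 1) w fps_X"
    "fps_cong (CARD('a) * j + 1) (fps_deriv w)
       (1 - fps_const ((h $ (CARD('a) * k)) ^ CARD('a)) * fps_X ^ (CARD('a) * j))"
    using normal_exists_deriv_cong[OF h] by blast
  have "w $ (CARD('a) * j + 1) = fps_deriv w $ (CARD('a) * j)"
    using of_nat_CARD_mult_plus_1[OF prime_card, of j] by simp
  also have "\<dots> = - ((h $ (CARD('a) * k)) ^ CARD('a))"
    using w(2,4) prime_gt_0_nat[OF prime_card] by (simp add: fps_cong_def del: fps_deriv_nth)
  finally have "w $ (CARD('a) * j + 1) \<noteq> 0"
    using h(4) by simp
  with w(1-3) show ?thesis
    by blast
qed
end

theorem proposition6p2: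
  fixes U H :: "('a::{field,finite}) fps set"
  assumes "prime CARD('a)"
    and "open_subgroup_S U"
    and "closed_in_S H"
    and "normal H (Sgrp\<lparr>carrier := U\<rparr>)"
    and "H \<noteq> {fps_X}"
  shows "\<exists>v \<in> H. \<exists>j::nat. j \<ge> 1 \<and>
           (\<forall>k < CARD('a) * j + 1. fps_nth v k = fps_nth fps_X k) \<and>
           fps_nth v ((CARD('a)) * j + 1) \<noteq> 0 \<and>
           (\<forall>n::nat. n > 0 \<longrightarrow> v [^]\<^bsub>Sgrp\<^esub> n \<noteq> \<one>\<^bsub>Sgrp\<^esub>)"
proof -
  obtain N0 where U: "subgroup U Sgrp" and U_open: "Snbhd N0 \<subseteq> U"
    using assms(2) by (auto simp: open_subgroup_S_def)
  have H_sub: "subgroup H (Sgrp\<lparr>carrier := U\<rparr>)"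
    using assms(4) by (simp add: normal_def)
  have HS: "H \<subseteq> Sset"
    using normal_subset_Sset[OF assms(1) U U_open assms(4)] .
  obtain h where h: "h \<in> H" "h \<noteq> fps_X"
    using assms(5) subgroup.one_closed[OF H_sub] by (auto simp: Sgrp_def)
  obtain v j where v: "v \<in> H" "1 \<le> j" "fps_cong (CARD('a) * j + 1) v fps_X"
    "v $ (CARD('a) * j + 1) \<noteq> 0"
  proof (rule Sset_neq_X_cases[of h])
    fix k assume "1 \<le> k" "fps_cong (CARD('a) * k) h fps_X" "h $ (CARD('a) * k) \<noteq> 0"
    then show thesis
      using normal_exists_leading_CARD_mult_plus_1[OF assms(1) U U_open assms(4) h(1)] that by blast
  qed (use h HS that in auto)
  have "v \<in> U"
    using v(1) subgroup.subset[OF H_sub] by auto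
  then have "\<forall>n::nat. n > 0 \<longrightarrow> v [^]\<^bsub>Sgrp\<^esub> n \<noteq> \<one>\<^bsub>Sgrp\<^esub>"
    using Sgrp_pow_ne_X[OF assms(1) U _ v(2-4)] by simp
  then show ?thesis
    using v(1,2,4) v(3)[unfolded fps_cong_def] by blast
qed

end
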